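(* Let $n\ge1$, $k\ge2$, and $\mathcal{K}=\{\kappa_0,\dots,\kappa_{k-1}\}$ a set of size $k$. For the uniform prior $\pi$ on $\mathcal{K}^n$ and the single-target gain function $g_{\rm T}$, $$V_{\rm T}[\pi\triangleright\mathbf{S}]=\frac{1}{k^n}\sum_{\substack{n_0,\dots,n_{k-1}\ge0\\ n_0+\dots+n_{k-1}=n}}\binom{n}{n_0,n_1,\dots,n_{k-1}}\frac{\max(n_0,\dots,n_{k-1})}{n}.$$
   Context: A dataset is $x=(x_0,\dots,x_{n-1})\in\mathcal{K}^n$; its histogram $h(x)$ is the map $\kappa\mapsto|\{i:x_i=\kappa\}|$; $\#z$ is the number of datasets with histogram $z$. Shuffle channel $\mathbf{S}:\mathcal{K}^n\to\mathcal{K}^n$: $\mathbf{S}_{x,y}=1/\#h(x)$ if $h(y)=h(x)$, else $0$. Uniform prior $\pi_x=1/k^n$. Single-target gain function: $\mathcal{W}=\mathcal{K}$, $g_{\rm T}(w,x)=1$ if $x_0=w$, else $0$. Posterior vulnerability: $V_{\rm T}[\pi\triangleright\mathbf{C}]=\sum_{y}\max_{w\in\mathcal{W}}\sum_{x}\pi_x\mathbf{C}_{x,y}g_{\rm T}(w,x)$. The sum in the claim ranges over all tuples of nonnegative integers summing to $n$, and $\binom{n}{n_0,\dots,n_{k-1}}$ is the multinomial coefficient. *)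

theory Defs
  imports Main "HOL.Real"
begin

definition datasets :: "'a set \<Rightarrow> nat \<Rightarrow> 'a list set" where
  "datasets K n = {xs. length xs = n \<and> set xs \<subseteq> K}"

definition hist :: "'a list \<Rightarrow> 'a \<Rightarrow> nat" where
  "hist xs = (\<lambda>\<kappa>. card {i. i < length xs \<and> xs ! i = \<kappa>})"

definition num_hist :: "'a set \<Rightarrow> nat \<Rightarrow> ('a \<Rightarrow> nat) \<Rightarrow> nat" where
  "num_hist K n z = card {x \<in> datasets K n. hist x = z}"

definition shuffle_ch :: "'a set \<Rightarrow> nat \<Rightarrow> 'a list \<Rightarrow> 'a list \<Rightarrow> real" where
  "shuffle_ch K n x y = (if hist y = hist x then 1 / real (num_hist K n (hist x)) else 0)"

definition uniform_prior :: "'a set \<Rightarrow> nat \<Rightarrow> 'a list \<Rightarrow> real" where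
  "uniform_prior K n x = 1 / real (card K) ^ n"

definition gain_T :: "'a \<Rightarrow> 'a list \<Rightarrow> real" where
  "gain_T w x = (if x ! 0 = w then 1 else 0)"

definition post_vuln ::
  "'x set \<Rightarrow> 'y set \<Rightarrow> 'w set \<Rightarrow> ('x \<Rightarrow> real) \<Rightarrow> ('x \<Rightarrow> 'y \<Rightarrow> real) \<Rightarrow> ('w \<Rightarrow> 'x \<Rightarrow> real) \<Rightarrow> real"
  where
  "post_vuln X Y W \<pi> C g = (\<Sum>y\<in>Y. Max ((\<lambda>w. \<Sum>x\<in>X. \<pi> x * C x y * g w x) ` W))"

definition multinomial :: "nat \<Rightarrow> nat \<Rightarrow> (nat \<Rightarrow> nat) \<Rightarrow> nat" where
  "multinomial n k m = fact n div (\<Prod>i<k. fact (m i))"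

definition compositions :: "nat \<Rightarrow> nat \<Rightarrow> (nat \<Rightarrow> nat) set" where
  "compositions k n = {m. (\<forall>i\<ge>k. m i = 0) \<and> (\<Sum>i<k. m i) = n}"

end

theory Submission
  imports Defs "HOL-Combinatorics.Multiset_Permutations"
begin

text \<open>
  For an output y only the permutations x of y have nonzero joint probability, each
  1 / (k^n #h(y)), and exactly the fraction count(w)/n of them start with w. The best guess for
  x_0 is therefore the most frequent symbol of y, which contributes max_i n_i / (k^n n). Summing
  over y and grouping the outputs by histogram, each histogram (n_0, ..., n_{k-1}) occurs for
  multinomially many datasets.
\<close>

lemma hist_eq_count_mset: "hist xs = count (mset xs)"
  by (auto simp: hist_def fun_eq_iff count_mset count_list_eq_length_filter
      length_filter_conv_card eq_commute)

lemma finite_datasets: "finite K \<Longrightarrow> finite (datasets K n)"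
  unfolding datasets_def using finite_lists_length_eq[of K n] by (simp add: conj_commute)

lemma datasets_with_mset:
  assumes "set_mset A \<subseteq> K" and "size A = n"
  shows "{x \<in> datasets K n. mset x = A} = permutations_of_multiset A"
  using assms unfolding datasets_def permutations_of_multiset_def
  by (auto dest: mset_eq_setD mset_eq_length)

lemma datasets_with_hist:
  assumes "y \<in> datasets K n"
  shows "{x \<in> datasets K n. hist x = hist y} = permutations_of_multiset (mset y)"
proof -
  have "{x \<in> datasets K n. hist x = hist y} = {x \<in> datasets K n. mset x = mset y}"
    by (simp add: hist_eq_count_mset count_inject)
  also have "\<dots> = permutations_of_multiset (mset y)"
    using assms by (intro datasets_with_mset) (auto simp: datasets_def)
  finally show ?thesis .
qed

lemma permutations_of_multiset_with_head:
  assumes "w \<in># A"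
  shows "{xs \<in> permutations_of_multiset A. xs ! 0 = w} = (#) w ` permutations_of_multiset (A - {#w#})"
proof safe
  fix xs assume xs: "xs \<in> permutations_of_multiset A" and "w = xs ! 0"
  from xs assms have "xs \<noteq> []"
    by (auto simp: permutations_of_multiset_def)
  then obtain z zs where "xs = z # zs"
    by (cases xs) auto
  with xs \<open>w = xs ! 0\<close> show "xs \<in> (#) (xs ! 0) ` permutations_of_multiset (A - {#xs ! 0#})"
    by (auto simp: permutations_of_multiset_Cons_iff)
next
  fix zs assume "zs \<in> permutations_of_multiset (A - {#w#})"
  with assms show "w # zs \<in> permutations_of_multiset A"
    by (simp add: permutations_of_multiset_Cons_iff)
qed simp

lemma card_permutations_of_multiset_with_head:
  "card {xs \<in> permutations_of_multiset A. xs ! 0 = w} * size A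
     = card (permutations_of_multiset A) * count A w"
proof (cases "w \<in># A")
  case True
  then show ?thesis
    by (simp add: permutations_of_multiset_with_head card_image
        card_permutations_of_multiset_remove_aux)
next
  case False
  then have "count A w = 0"
    by (simp add: not_in_iff)
  moreover have "{xs \<in> permutations_of_multiset A. xs ! 0 = w} = {}" if "A \<noteq> {#}"
    using False that by (auto simp: permutations_of_multiset_def dest!: nth_mem[of 0])
  ultimately show ?thesis
    by (cases "A = {#}") auto
qed

lemma shuffle_joint_gain:
  assumes y: "y \<in> datasets K n" and "finite K" and "n > 0"
  shows "(\<Sum>x\<in>datasets K n. uniform_prior K n x * shuffle_ch K n x y * gain_T w x)
     = real (count (mset y) w) / (real (card K) ^ n * real n)"
proof -
  define P where "P = permutations_of_multiset (mset y)"
  define c where "c = real (card K) ^ n * real (card P)"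
  have size_y: "size (mset y) = n"
    using y by (simp add: datasets_def)
  have "(\<Sum>x\<in>datasets K n. uniform_prior K n x * shuffle_ch K n x y * gain_T w x)
      = (\<Sum>x\<in>{x \<in> datasets K n. hist x = hist y}.
           uniform_prior K n x * shuffle_ch K n x y * gain_T w x)"
    by (rule sum.mono_neutral_right) (auto simp: shuffle_ch_def finite_datasets \<open>finite K\<close>)
  also have "\<dots> = (\<Sum>x\<in>P. uniform_prior K n x * shuffle_ch K n x y * gain_T w x)"
    by (simp add: datasets_with_hist[OF y] P_def)
  also have "\<dots> = (\<Sum>x\<in>P. if x ! 0 = w then 1 / c else 0)"
  proof (rule sum.cong[OF refl])
    fix x assume "x \<in> P"
    then have "hist x = hist y"
      by (simp add: P_def hist_eq_count_mset permutations_of_multisetD)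
    moreover have "num_hist K n (hist y) = card P"
      by (simp add: num_hist_def datasets_with_hist[OF y] P_def)
    ultimately show "uniform_prior K n x * shuffle_ch K n x y * gain_T w x = (if x ! 0 = w then 1 / c else 0)"
      by (simp add: c_def uniform_prior_def shuffle_ch_def gain_T_def)
  qed
  also have "\<dots> = real (card {x \<in> P. x ! 0 = w}) / c"
    by (simp add: P_def flip: sum.inter_filter)
  also have "real (card {x \<in> P. x ! 0 = w}) = real (card P) * real (count (mset y) w) / real n"
    using card_permutations_of_multiset_with_head[of "mset y" w] size_y \<open>n > 0\<close>
    by (simp add: P_def field_simps flip: of_nat_mult)
  finally show ?thesis
    by (simp add: c_def P_def)
qed

lemma shuffle_max_joint_gain:
  assumes "y \<in> datasets K n" and "finite K" and "K \<noteq> {}" and "n > 0"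
  shows "Max ((\<lambda>w. \<Sum>x\<in>datasets K n. uniform_prior K n x * shuffle_ch K n x y * gain_T w x) ` K)
     = real (Max (count (mset y) ` K)) / (real (card K) ^ n * real n)"
proof -
  define c where "c = real (card K) ^ n * real n"
  have "(\<lambda>w. \<Sum>x\<in>datasets K n. uniform_prior K n x * shuffle_ch K n x y * gain_T w x) ` K
      = (\<lambda>v. real v / c) ` count (mset y) ` K"
    using assms by (simp add: shuffle_joint_gain c_def image_image)
  also have "Max \<dots> = real (Max (count (mset y) ` K)) / c"
    using assms by (intro mono_Max_commute[symmetric]) (auto simp: mono_def c_def divide_right_mono)
  finally show ?thesis
    by (simp add: c_def)
qed

definition mset_of_counts :: "(nat \<Rightarrow> 'a) \<Rightarrow> nat \<Rightarrow> (nat \<Rightarrow> nat) \<Rightarrow> 'a multiset" where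
  "mset_of_counts e k m = (\<Sum>i<k. replicate_mset (m i) (e i))"

definition counts_of_mset :: "(nat \<Rightarrow> 'a) \<Rightarrow> nat \<Rightarrow> 'a multiset \<Rightarrow> nat \<Rightarrow> nat" where
  "counts_of_mset e k A i = (if i < k then count A (e i) else 0)"

lemma count_mset_of_counts:
  assumes "inj_on e {..<k}" and "j < k"
  shows "count (mset_of_counts e k m) (e j) = m j"
proof -
  have "count (mset_of_counts e k m) (e j) = (\<Sum>i<k. if i = j then m i else 0)"
    unfolding mset_of_counts_def count_sum
    by (rule sum.cong) (use assms in \<open>auto simp: inj_on_eq_iff\<close>)
  with assms show ?thesis
    by simp
qed

lemma set_mset_of_counts: "set_mset (mset_of_counts e k m) \<subseteq> e ` {..<k}"
  by (auto simp: mset_of_counts_def set_mset_sum split: if_splits)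

lemma size_mset_of_counts: "size (mset_of_counts e k m) = (\<Sum>i<k. m i)"
  by (induction k) (auto simp: mset_of_counts_def)

lemma mset_of_counts_of_mset:
  assumes "inj_on e {..<k}" and "set_mset A \<subseteq> e ` {..<k}"
  shows "mset_of_counts e k (counts_of_mset e k A) = A"
proof (rule multiset_eqI)
  fix x
  show "count (mset_of_counts e k (counts_of_mset e k A)) x = count A x"
  proof (cases "x \<in> e ` {..<k}")
    case True
    with assms(1) show ?thesis
      by (auto simp: count_mset_of_counts counts_of_mset_def)
  next
    case False
    with assms(2) set_mset_of_counts show ?thesis
      by (metis count_eq_zero_iff subset_iff)
  qed
qed

lemma counts_of_mset_of_counts:
  assumes "inj_on e {..<k}" and "\<forall>i\<ge>k. m i = 0"
  shows "counts_of_mset e k (mset_of_counts e k m) = m"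
  using assms by (auto simp: fun_eq_iff counts_of_mset_def count_mset_of_counts)

lemma size_eq_sum_counts_of_mset:
  assumes "inj_on e {..<k}" and "set_mset A \<subseteq> e ` {..<k}"
  shows "size A = (\<Sum>i<k. counts_of_mset e k A i)"
  using size_mset_of_counts[of e k "counts_of_mset e k A"] mset_of_counts_of_mset[OF assms]
  by simp

lemma card_permutations_of_mset_of_counts:
  assumes "inj_on e {..<k}" and "\<forall>i\<ge>k. m i = 0"
  shows "card (permutations_of_multiset (mset_of_counts e k m)) = multinomial (\<Sum>i<k. m i) k m"
proof -
  let ?A = "mset_of_counts e k m"
  have "(\<Prod>x\<in>set_mset ?A. fact (count ?A x)) = (\<Prod>x\<in>e ` {..<k}. fact (count ?A x) :: nat)"
    by (rule prod.mono_neutral_left) (auto simp: set_mset_of_counts not_in_iff)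
  also have "\<dots> = (\<Prod>i<k. fact (m i))"
    using assms(1) by (simp add: prod.reindex count_mset_of_counts)
  finally show ?thesis
    by (simp add: card_permutations_of_multiset(1) size_mset_of_counts multinomial_def)
qed

lemma datasets_with_counts:
  assumes "bij_betw e {..<k} K" and "m \<in> compositions k n"
  shows "{y \<in> datasets K n. counts_of_mset e k (mset y) = m}
       = permutations_of_multiset (mset_of_counts e k m)"
proof -
  have inj: "inj_on e {..<k}" and range: "e ` {..<k} = K"
    using assms(1) by (auto simp: bij_betw_def)
  have "{y \<in> datasets K n. counts_of_mset e k (mset y) = m}
      = {y \<in> datasets K n. mset y = mset_of_counts e k m}"
    using mset_of_counts_of_mset[OF inj] counts_of_mset_of_counts[OF inj] assms(2)
    by (auto simp: datasets_def compositions_def range)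
  also have "\<dots> = permutations_of_multiset (mset_of_counts e k m)"
    using set_mset_of_counts[of e k m] assms(2)
    by (intro datasets_with_mset) (auto simp: range size_mset_of_counts compositions_def)
  finally show ?thesis .
qed

lemma image_counts_of_mset_datasets:
  assumes "bij_betw e {..<k} K"
  shows "(\<lambda>y. counts_of_mset e k (mset y)) ` datasets K n = compositions k n"
proof
  have inj: "inj_on e {..<k}" and range: "e ` {..<k} = K"
    using assms by (auto simp: bij_betw_def)
  show "(\<lambda>y. counts_of_mset e k (mset y)) ` datasets K n \<subseteq> compositions k n"
  proof clarify
    fix y assume y: "y \<in> datasets K n"
    then have "size (mset y) = (\<Sum>i<k. counts_of_mset e k (mset y) i)"
      by (intro size_eq_sum_counts_of_mset[OF inj]) (auto simp: datasets_def range)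
    with y show "counts_of_mset e k (mset y) \<in> compositions k n"
      by (simp add: compositions_def counts_of_mset_def datasets_def)
  qed
  show "compositions k n \<subseteq> (\<lambda>y. counts_of_mset e k (mset y)) ` datasets K n"
  proof
    fix m assume m: "m \<in> compositions k n"
    obtain y where "y \<in> permutations_of_multiset (mset_of_counts e k m)"
      using permutations_of_multiset_not_empty by blast
    then have "y \<in> {y \<in> datasets K n. counts_of_mset e k (mset y) = m}"
      by (simp add: datasets_with_counts[OF assms m])
    then show "m \<in> (\<lambda>y. counts_of_mset e k (mset y)) ` datasets K n"
      by force
  qed
qed

lemma sum_datasets_by_counts:
  fixes f :: "(nat \<Rightarrow> nat) \<Rightarrow> 'b :: comm_semiring_1"
  assumes "bij_betw e {..<k} K" and "finite K"
  shows "(\<Sum>y\<in>datasets K n. f (counts_of_mset e k (mset y)))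
       = (\<Sum>m\<in>compositions k n. of_nat (multinomial n k m) * f m)"
proof -
  let ?\<phi> = "\<lambda>y. counts_of_mset e k (mset y)"
  have inj: "inj_on e {..<k}"
    using assms(1) by (simp add: bij_betw_def)
  have "(\<Sum>y\<in>datasets K n. f (?\<phi> y))
      = (\<Sum>m\<in>?\<phi> ` datasets K n. \<Sum>y\<in>{y \<in> datasets K n. ?\<phi> y = m}. f (?\<phi> y))"
    using assms(2) by (intro sum.image_gen) (simp add: finite_datasets)
  also have "\<dots> = (\<Sum>m\<in>compositions k n. of_nat (card {y \<in> datasets K n. ?\<phi> y = m}) * f m)"
    by (simp add: image_counts_of_mset_datasets[OF assms(1)])
  also have "\<dots> = (\<Sum>m\<in>compositions k n. of_nat (multinomial n k m) * f m)"
    by (rule sum.cong[OF refl])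
      (auto simp: datasets_with_counts[OF assms(1)] card_permutations_of_mset_of_counts[OF inj]
        compositions_def)
  finally show ?thesis .
qed

theorem mainTheorem13:
  fixes K :: "'a set" and n k :: nat
  assumes "n \<ge> 1" and "k \<ge> 2" and "finite K" and "card K = k"
  shows "post_vuln (datasets K n) (datasets K n) K (uniform_prior K n) (shuffle_ch K n) gain_T
     = (1 / real k ^ n) * (\<Sum>m\<in>compositions k n.
          real (multinomial n k m) * real (Max (m ` {..<k})) / real n)"
proof -
  obtain e where e: "bij_betw e {..<k} K"
    using ex_bij_betw_nat_finite[OF \<open>finite K\<close>] \<open>card K = k\<close> by (auto simp: lessThan_atLeast0)
  have "K \<noteq> {}"
    using assms(2,4) by auto
  define g where "g m = real (Max (m ` {..<k})) / (real k ^ n * real n)" for m :: "nat \<Rightarrow> nat"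
  have column: "Max ((\<lambda>w. \<Sum>x\<in>datasets K n. uniform_prior K n x * shuffle_ch K n x y * gain_T w x) ` K)
      = g (counts_of_mset e k (mset y))" if "y \<in> datasets K n" for y
  proof -
    have "count (mset y) ` K = counts_of_mset e k (mset y) ` {..<k}"
      using e by (auto simp: bij_betw_def counts_of_mset_def image_image)
    with shuffle_max_joint_gain[OF that \<open>finite K\<close> \<open>K \<noteq> {}\<close>] assms(1,4) show ?thesis
      by (simp add: g_def)
  qed
  have "post_vuln (datasets K n) (datasets K n) K (uniform_prior K n) (shuffle_ch K n) gain_T
      = (\<Sum>y\<in>datasets K n. g (counts_of_mset e k (mset y)))"
    by (simp add: post_vuln_def column)
  also have "\<dots> = (\<Sum>m\<in>compositions k n. real (multinomial n k m) * g m)"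
    by (rule sum_datasets_by_counts[OF e \<open>finite K\<close>])
  finally show ?thesis
    by (simp add: g_def sum_distrib_left)
qed

end
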